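(* Let $D=(V,A)$ be a digraph with minimum dicut size $\tau$, and let $\vec G=(V,A\cup A^{-1})$ with weight $w^D$ be as in the context. For every integer $k\le\tau$, $D$ contains $k$ pairwise arc-disjoint dijoins if and only if $\vec G$ with weight $w^D$ can pack $k$ strongly connected digraphs, i.e. there exist arc subsets $F_1,\dots,F_k\subseteq A\cup A^{-1}$, each satisfying $\delta^+_{\vec G}(U)\cap F_i\neq\emptyset$ for all $\emptyset\neq U\subsetneq V$, such that every arc $e$ of $\vec G$ belongs to at most $w^D_e$ of the sets $F_i$.
   Context: Digraphs are finite and loopless; parallel arcs allowed. For $\emptyset\neq U\subsetneq V$, $\delta^+(U)$ / $\delta^-(U)$ denote arcs leaving/entering $U$. A dicut of $D$ is $\delta^+_D(U)$ with $\emptyset\neq U\subsetneq V$ and $\delta^-_D(U)=\emptyset$; a dijoin is an arc set meeting every dicut; "$D$ has minimum dicut size $\tau$" means $D$ has at least one dicut and the minimum number of arcs in a dicut is $\tau$. $A^{-1}$ denotes the set of reverses of the arcs of $A$ (one reverse arc $a^{-1}$ per arc $a\in A$, considered distinct from arcs of $A$). The digraph $\vec G$ has vertex set $V$ and arc set $A\cup A^{-1}$, and the weight $w^D$ is defined by $w^D_a=\tau$ for $a\in A$ and $w^D_{a^{-1}}=1$ for $a^{-1}\in A^{-1}$. *)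

theory Defs
  imports Main
begin

text \<open>A digraph is given by a finite vertex set V, a finite set of arc names A
(allowing parallel arcs), and tail/head maps. Loopless: tail differs from head.\<close>

definition digraph :: "'v set \<Rightarrow> 'e set \<Rightarrow> ('e \<Rightarrow> 'v) \<Rightarrow> ('e \<Rightarrow> 'v) \<Rightarrow> bool" where
  "digraph V A tail head \<longleftrightarrow> finite V \<and> finite A \<and>
     (\<forall>a\<in>A. tail a \<in> V \<and> head a \<in> V \<and> tail a \<noteq> head a)"

definition out_arcs :: "'e set \<Rightarrow> ('e \<Rightarrow> 'v) \<Rightarrow> ('e \<Rightarrow> 'v) \<Rightarrow> 'v set \<Rightarrow> 'e set" where
  "out_arcs A tail head U = {a\<in>A. tail a \<in> U \<and> head a \<notin> U}"

definition in_arcs :: "'e set \<Rightarrow> ('e \<Rightarrow> 'v) \<Rightarrow> ('e \<Rightarrow> 'v) \<Rightarrow> 'v set \<Rightarrow> 'e set" where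
  "in_arcs A tail head U = {a\<in>A. tail a \<notin> U \<and> head a \<in> U}"

definition is_dicut :: "'v set \<Rightarrow> 'e set \<Rightarrow> ('e \<Rightarrow> 'v) \<Rightarrow> ('e \<Rightarrow> 'v) \<Rightarrow> 'e set \<Rightarrow> bool" where
  "is_dicut V A tail head C \<longleftrightarrow> (\<exists>U. U \<noteq> {} \<and> U \<subset> V \<and> in_arcs A tail head U = {} \<and> C = out_arcs A tail head U)"

definition is_dijoin :: "'v set \<Rightarrow> 'e set \<Rightarrow> ('e \<Rightarrow> 'v) \<Rightarrow> ('e \<Rightarrow> 'v) \<Rightarrow> 'e set \<Rightarrow> bool" where
  "is_dijoin V A tail head J \<longleftrightarrow> J \<subseteq> A \<and> (\<forall>C. is_dicut V A tail head C \<longrightarrow> J \<inter> C \<noteq> {})"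

definition min_dicut_size :: "'v set \<Rightarrow> 'e set \<Rightarrow> ('e \<Rightarrow> 'v) \<Rightarrow> ('e \<Rightarrow> 'v) \<Rightarrow> nat \<Rightarrow> bool" where
  "min_dicut_size V A tail head \<tau> \<longleftrightarrow> (\<exists>C. is_dicut V A tail head C) \<and>
     \<tau> = Min (card ` {C. is_dicut V A tail head C})"

text \<open>The bidirected digraph: arcs Inl a (original) and Inr a (the reverse a^-1).\<close>
definition bi_arcs :: "'e set \<Rightarrow> ('e + 'e) set" where
  "bi_arcs A = Inl ` A \<union> Inr ` A"

fun bi_tail :: "('e \<Rightarrow> 'v) \<Rightarrow> ('e \<Rightarrow> 'v) \<Rightarrow> 'e + 'e \<Rightarrow> 'v" where
  "bi_tail tail head (Inl a) = tail a"
| "bi_tail tail head (Inr a) = head a"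

fun bi_head :: "('e \<Rightarrow> 'v) \<Rightarrow> ('e \<Rightarrow> 'v) \<Rightarrow> 'e + 'e \<Rightarrow> 'v" where
  "bi_head tail head (Inl a) = head a"
| "bi_head tail head (Inr a) = tail a"

fun wD :: "nat \<Rightarrow> 'e + 'e \<Rightarrow> nat" where
  "wD \<tau> (Inl a) = \<tau>"
| "wD \<tau> (Inr a) = 1"

end

theory Submission
  imports Defs
begin

text \<open>A set \<open>U\<close> with no arc leaving it is left in \<vec>G only by reversed arcs
  \<open>a\<^sup>-\<^sup>1\<close> with \<open>a\<close> entering \<open>U\<close>, and the arcs entering such a \<open>U\<close> form the dicut
  \<open>\<delta>\<^sup>+(V - U)\<close>. Hence \<open>J \<subseteq> A\<close> is a dijoin exactly when \<open>A \<union> J\<^sup>-\<^sup>1\<close> is strongly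
  connecting in \<vec>G, and a packing \<open>F\<^sub>1, \<dots>, F\<^sub>k\<close> of strongly connecting sets
  yields the dijoins \<open>{a. a\<^sup>-\<^sup>1 \<in> F\<^sub>i}\<close>, which are disjoint because every reversed
  arc has weight 1. Original arcs have weight \<open>\<tau> \<ge> k\<close>, so they never obstruct.\<close>

lemma out_arcs_bi_arcs:
  "out_arcs (bi_arcs A) (bi_tail tail head) (bi_head tail head) U =
     Inl ` out_arcs A tail head U \<union> Inr ` in_arcs A tail head U"
  unfolding out_arcs_def in_arcs_def bi_arcs_def by auto

lemma in_arcs_Diff:
  assumes "digraph V A tail head"
  shows "in_arcs A tail head (V - U) = out_arcs A tail head U"
  using assms unfolding digraph_def in_arcs_def out_arcs_def by auto

lemma out_arcs_Diff:
  assumes "digraph V A tail head"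
  shows "out_arcs A tail head (V - U) = in_arcs A tail head U"
  using assms unfolding digraph_def in_arcs_def out_arcs_def by auto

lemma is_dicut_iff_in_arcs:
  assumes "digraph V A tail head"
  shows "is_dicut V A tail head C \<longleftrightarrow>
    (\<exists>U. U \<noteq> {} \<and> U \<subset> V \<and> out_arcs A tail head U = {} \<and> C = in_arcs A tail head U)"
proof
  assume "is_dicut V A tail head C"
  then obtain W where W: "W \<noteq> {}" "W \<subset> V" "in_arcs A tail head W = {}"
    "C = out_arcs A tail head W" unfolding is_dicut_def by blast
  have "V - (V - W) = W" using W(2) by blast
  then show "\<exists>U. U \<noteq> {} \<and> U \<subset> V \<and> out_arcs A tail head U = {} \<and> C = in_arcs A tail head U"
    using W in_arcs_Diff[OF assms, of "V - W"] out_arcs_Diff[OF assms, of "V - W"]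
    by (intro exI[of _ "V - W"]) auto
next
  assume "\<exists>U. U \<noteq> {} \<and> U \<subset> V \<and> out_arcs A tail head U = {} \<and> C = in_arcs A tail head U"
  then obtain U where U: "U \<noteq> {}" "U \<subset> V" "out_arcs A tail head U = {}"
    "C = in_arcs A tail head U" by blast
  then show "is_dicut V A tail head C"
    unfolding is_dicut_def using in_arcs_Diff[OF assms] out_arcs_Diff[OF assms]
    by (intro exI[of _ "V - U"]) auto
qed

definition bi_strongly_connected ::
    "'v set \<Rightarrow> 'e set \<Rightarrow> ('e \<Rightarrow> 'v) \<Rightarrow> ('e \<Rightarrow> 'v) \<Rightarrow> ('e + 'e) set \<Rightarrow> bool" where
  "bi_strongly_connected V A tail head F \<longleftrightarrow>
     (\<forall>U. U \<noteq> {} \<and> U \<subset> V \<longrightarrow>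
        out_arcs (bi_arcs A) (bi_tail tail head) (bi_head tail head) U \<inter> F \<noteq> {})"

lemma bi_strongly_connected_mono:
  assumes "bi_strongly_connected V A tail head F" and "F \<subseteq> G"
  shows "bi_strongly_connected V A tail head G"
proof -
  have "out_arcs (bi_arcs A) (bi_tail tail head) (bi_head tail head) U \<inter> G \<noteq> {}"
    if "U \<noteq> {} \<and> U \<subset> V" for U
  proof -
    have "out_arcs (bi_arcs A) (bi_tail tail head) (bi_head tail head) U \<inter> F \<noteq> {}"
      using assms(1) that unfolding bi_strongly_connected_def by simp
    then show ?thesis using assms(2) by blast
  qed
  then show ?thesis unfolding bi_strongly_connected_def by simp
qed

lemma is_dijoin_iff_bi_strongly_connected:
  assumes "digraph V A tail head" and "J \<subseteq> A"
  shows "is_dijoin V A tail head J \<longleftrightarrow> bi_strongly_connected V A tail head (Inl ` A \<union> Inr ` J)"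
proof -
  have cut: "out_arcs (bi_arcs A) (bi_tail tail head) (bi_head tail head) U \<inter> (Inl ` A \<union> Inr ` J) =
          Inl ` out_arcs A tail head U \<union> Inr ` (J \<inter> in_arcs A tail head U)" for U
    unfolding out_arcs_bi_arcs by (auto simp: out_arcs_def)
  have "is_dijoin V A tail head J \<longleftrightarrow>
      (\<forall>U. U \<noteq> {} \<and> U \<subset> V \<and> out_arcs A tail head U = {} \<longrightarrow> J \<inter> in_arcs A tail head U \<noteq> {})"
    using assms(2) unfolding is_dijoin_def is_dicut_iff_in_arcs[OF assms(1)]
    by (intro iffI allI impI conjI) (blast, blast, blast)
  then show ?thesis unfolding bi_strongly_connected_def cut by (simp add: imp_conjL)
qed

lemma card_Collect_less_le_1_iff:
  "card {i. i < (k::nat) \<and> P i} \<le> 1 \<longleftrightarrow> (\<forall>i<k. \<forall>j<k. P i \<and> P j \<longrightarrow> i = j)"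
proof -
  have fin: "finite {i. i < k \<and> P i}" by (rule finite_subset[OF _ finite_lessThan[of k]]) auto
  show ?thesis unfolding One_nat_def card_le_Suc0_iff_eq[OF fin] by blast
qed

lemma pairwise_disjoint_iff_card_le_1:
  "(\<forall>i<(k::nat). \<forall>j<k. i \<noteq> j \<longrightarrow> J i \<inter> J j = {}) \<longleftrightarrow>
     (\<forall>a. card {i. i < k \<and> a \<in> J i} \<le> 1)"
  unfolding card_Collect_less_le_1_iff by blast

lemma bi_packing_of_disjoint_dijoins:
  fixes k :: nat
  assumes "digraph V A tail head" and "k \<le> \<tau>"
    and dijoin: "\<forall>i<k. is_dijoin V A tail head (J i)"
    and disjoint: "\<forall>i<k. \<forall>j<k. i \<noteq> j \<longrightarrow> J i \<inter> J j = {}"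
  defines "F i \<equiv> Inl ` A \<union> Inr ` J i"
  shows "\<forall>i<k. F i \<subseteq> bi_arcs A \<and> bi_strongly_connected V A tail head (F i)"
    and "\<forall>e\<in>bi_arcs A. card {i. i < k \<and> e \<in> F i} \<le> wD \<tau> e"
proof -
  have J_sub: "J i \<subseteq> A" if "i < k" for i using dijoin that unfolding is_dijoin_def by blast
  show "\<forall>i<k. F i \<subseteq> bi_arcs A \<and> bi_strongly_connected V A tail head (F i)"
    using dijoin J_sub is_dijoin_iff_bi_strongly_connected[OF assms(1)]
    unfolding F_def bi_arcs_def by blast
  have "card {i. i < k \<and> e \<in> F i} \<le> wD \<tau> e" for e
  proof (cases e)
    case (Inl a)
    have "card {i. i < k \<and> e \<in> F i} \<le> card {..<k}" by (rule card_mono) auto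
    then show ?thesis using Inl assms(2) by simp
  next
    case (Inr a)
    then have "{i. i < k \<and> e \<in> F i} = {i. i < k \<and> a \<in> J i}" unfolding F_def by auto
    then show ?thesis using Inr disjoint unfolding pairwise_disjoint_iff_card_le_1 by simp
  qed
  then show "\<forall>e\<in>bi_arcs A. card {i. i < k \<and> e \<in> F i} \<le> wD \<tau> e" by blast
qed

lemma disjoint_dijoins_of_bi_packing:
  fixes k :: nat
  assumes "digraph V A tail head"
    and F: "\<forall>i<k. F i \<subseteq> bi_arcs A \<and> bi_strongly_connected V A tail head (F i)"
    and weight: "\<forall>e\<in>bi_arcs A. card {i. i < k \<and> e \<in> F i} \<le> wD \<tau> e"
  defines "J i \<equiv> {a \<in> A. Inr a \<in> F i}"
  shows "\<forall>i<k. is_dijoin V A tail head (J i)"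
    and "\<forall>i<k. \<forall>j<k. i \<noteq> j \<longrightarrow> J i \<inter> J j = {}"
proof -
  have "is_dijoin V A tail head (J i)" if "i < k" for i
  proof -
    have "F i \<subseteq> Inl ` A \<union> Inr ` J i"
      using F that unfolding J_def bi_arcs_def by auto
    then have "bi_strongly_connected V A tail head (Inl ` A \<union> Inr ` J i)"
      using F that bi_strongly_connected_mono by blast
    moreover have "J i \<subseteq> A" unfolding J_def by blast
    ultimately show ?thesis using is_dijoin_iff_bi_strongly_connected[OF assms(1)] by simp
  qed
  then show "\<forall>i<k. is_dijoin V A tail head (J i)" by blast
  have "card {i. i < k \<and> a \<in> J i} \<le> 1" for a
  proof (cases "a \<in> A")
    case True
    then have "Inr a \<in> bi_arcs A" unfolding bi_arcs_def by blast
    with weight have "card {i. i < k \<and> Inr a \<in> F i} \<le> 1" by fastforce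
    then show ?thesis using True unfolding J_def by simp
  qed (simp add: J_def)
  then show "\<forall>i<k. \<forall>j<k. i \<noteq> j \<longrightarrow> J i \<inter> J j = {}"
    unfolding pairwise_disjoint_iff_card_le_1 by blast
qed

theorem proposition2:
  fixes V :: "'v set" and A :: "'e set" and tail head :: "'e \<Rightarrow> 'v"
    and \<tau> k :: nat
  assumes "digraph V A tail head"
    and "min_dicut_size V A tail head \<tau>"
    and "k \<le> \<tau>"
  shows "(\<exists>J :: nat \<Rightarrow> 'e set.
            (\<forall>i<k. is_dijoin V A tail head (J i)) \<and>
            (\<forall>i<k. \<forall>j<k. i \<noteq> j \<longrightarrow> J i \<inter> J j = {}))
     \<longleftrightarrow>
         (\<exists>F :: nat \<Rightarrow> ('e + 'e) set.
            (\<forall>i<k. F i \<subseteq> bi_arcs A \<and>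
               (\<forall>U. U \<noteq> {} \<and> U \<subset> V \<longrightarrow>
                  out_arcs (bi_arcs A) (bi_tail tail head) (bi_head tail head) U \<inter> F i \<noteq> {})) \<and>
            (\<forall>e\<in>bi_arcs A. card {i. i < k \<and> e \<in> F i} \<le> wD \<tau> e))"
    (is "?dijoins \<longleftrightarrow> ?packing")
proof
  assume ?dijoins
  then obtain J where "\<forall>i<k. is_dijoin V A tail head (J i)"
    and "\<forall>i<k. \<forall>j<k. i \<noteq> j \<longrightarrow> J i \<inter> J j = {}" by blast
  from bi_packing_of_disjoint_dijoins[OF assms(1,3) this]
  show ?packing
    by (intro exI[of _ "\<lambda>i. Inl ` A \<union> Inr ` J i"]) (simp add: bi_strongly_connected_def)
next
  assume ?packing
  then obtain F where "\<forall>i<k. F i \<subseteq> bi_arcs A \<and> bi_strongly_connected V A tail head (F i)"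
    and "\<forall>e\<in>bi_arcs A. card {i. i < k \<and> e \<in> F i} \<le> wD \<tau> e"
    unfolding bi_strongly_connected_def by blast
  from disjoint_dijoins_of_bi_packing[OF assms(1) this]
  show ?dijoins by (intro exI[of _ "\<lambda>i. {a \<in> A. Inr a \<in> F i}"]) simp
qed

end
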